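(* Let $q_1=(x_1,1/x_1)$, $q_2=(x_2,y_2)$, $q_3=(1/y_3,y_3)$ with $x_1,x_2,y_2,y_3>0$, $x_1<x_2<1/y_3$, $y_3<y_2<1/x_1$ and $x_2y_2<1$. Suppose $$A:=1+(x_2-x_1)\,y_2+\Bigl(\frac1{y_3}-x_2\Bigr)y_3\ \ge\ 2.$$ Then $$T(q_1,q_2)+T(q_2,q_3)\ \ge\ A-1+\sinh(A-1).$$
   Context: For points $p=(x_p,y_p)$ and $q=(x_q,y_q)$ in $(0,\infty)^2$ define $$T(p,q):=\tfrac12\,(y_p-y_q+x_q-x_p)\,(x_p+y_q).$$ (In the paper, $q_1,q_2,q_3$ form a "double step" of a normalized tile with hyperbola $xy=1$, where $q_1,q_3$ lie on the hyperbola and $q_2$ lies strictly below it; $A$ is the tile area, $T(q_1,q_2)+T(q_2,q_3)$ its crown area, and the conclusion is $|C_t|/|t|\ge\xi_s(\rho_t)$ with $\rho_t=1/A\le 1/2$.) *)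

theory Defs
  imports Complex_Main
begin

definition T :: "real \<times> real \<Rightarrow> real \<times> real \<Rightarrow> real" where
  "T p q = (1/2) * (snd p - snd q + fst q - fst p) * (fst p + snd q)"

end

theory Submission
  imports Defs "HOL-Analysis.Analysis"
begin

text \<open>
  Write \<open>a = x1, p = x2, q = y2, b = y3\<close>, \<open>X = a/p\<close>, \<open>Y = b/q\<close> and \<open>s = A - 1\<close>.
  Then \<open>s - 1 = p q (1 - X - Y) \<le> 1 - X - Y\<close>, and the crown area is \<open>s + L/2\<close> for an
  explicit rational function \<open>L\<close> which, by \<open>p q \<le> 1\<close>, satisfies
  \<open>L \<ge> (q/p) D\<^sub>1 + (p/q) D\<^sub>2\<close> with \<open>D\<^sub>1 = 1/X - (1 - Y + Y\<^sup>2)\<close> and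
  \<open>D\<^sub>2 = 1/Y - (1 - X + X\<^sup>2)\<close>. A polynomial inequality in \<open>X, Y\<close> gives
  \<open>D\<^sub>1 D\<^sub>2 \<ge> K\<^sup>2\<close> for \<open>K = 6/5 + 5/2 (1 - X - Y)\<close>, so \<open>L/2 \<ge> K\<close> by AM-GM,
  while convexity of \<open>exp\<close> gives \<open>sinh s \<le> 6/5 + 5/2 (s - 1) \<le> K\<close>.
\<close>

lemma sextic_nonneg_on_unit_interval:
  fixes t :: real
  assumes "0 \<le> t" "t \<le> 1"
  shows "0 \<le> 49/1600 - 249/800*t + 1699/1600*t^2 + 27/16*t^3 - 93/64*t^4 - 1/32*t^5 + 1/64*t^6"
proof -
  have quadratic: "0 \<le> 49/1600 - 249/800*t + 1699/1600*t^2"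
  proof -
    have "0 \<le> (1699*t - 249)^2" by simp
    then show ?thesis by (simp add: power2_eq_square algebra_simps)
  qed
  have "t^2 \<le> 1" using assms by (simp add: power_le_one)
  then have "0 \<le> 27/16 - 93/64*t - 1/32*t^2" using assms by linarith
  then have cubic: "0 \<le> t^3 * (27/16 - 93/64*t - 1/32*t^2)" using assms by simp
  have "49/1600 - 249/800*t + 1699/1600*t^2 + 27/16*t^3 - 93/64*t^4 - 1/32*t^5 + 1/64*t^6
      = (49/1600 - 249/800*t + 1699/1600*t^2) + t^3 * (27/16 - 93/64*t - 1/32*t^2) + t^6/64"
    by (simp add: algebra_simps power_numeral_reduce)
  with quadratic cubic show ?thesis by simp
qed

lemma monic_cubic_nonneg_between:
  fixes c0 c1 c2 h z :: real
  defines "f \<equiv> \<lambda>z. c0 + c1 * z + c2 * z^2 + z^3"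
  assumes "0 < h" "0 \<le> z" "z \<le> h" "z + h + c2 \<le> 0" "0 \<le> f 0" "0 \<le> f h"
  shows "0 \<le> f z"
proof -
  \<comment> \<open>The deviation of \<open>f\<close> from its chord over \<open>[0, h]\<close> factors as \<open>z (h - z) (- c2 - h - z)\<close>.\<close>
  have chord: "h * f z = (h - z) * f 0 + z * f h + z * h * (h - z) * (- c2 - h - z)"
    unfolding f_def by (simp add: algebra_simps power_numeral_reduce)
  have "0 \<le> (h - z) * f 0 + z * f h + z * h * (h - z) * (- c2 - h - z)"
    using assms by (intro add_nonneg_nonneg mult_nonneg_nonneg) auto
  then have "0 \<le> h * f z" using chord by linarith
  with \<open>0 < h\<close> show ?thesis by (simp add: zero_le_mult_iff)
qed

lemma deficit_product_lower_bound:
  fixes X Y :: real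
  assumes "0 < X" "0 < Y" "X + Y \<le> 1"
  shows "X * Y * (6/5 + 5/2 * (1 - X - Y))^2
           \<le> (1 - X * (1 - Y + Y^2)) * (1 - Y * (1 - X + X^2))"
proof -
  define \<sigma> where "\<sigma> = X + Y"
  define c1 where "c1 = 3 - 2 * \<sigma> + \<sigma>^2 - (6/5 + 5/2 * (1 - \<sigma>))^2"
  define f where "f = (\<lambda>z::real. (1 - \<sigma>) + c1 * z + (- 1 - \<sigma>) * z^2 + z^3)"
  have symmetric: "(1 - X * (1 - Y + Y^2)) * (1 - Y * (1 - X + X^2))
      - X * Y * (6/5 + 5/2 * (1 - X - Y))^2 = f (X * Y)"
    unfolding f_def c1_def \<sigma>_def by (simp add: algebra_simps power2_eq_square power3_eq_cube)
  have "0 < \<sigma>" "\<sigma> \<le> 1" using assms unfolding \<sigma>_def by auto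
  then have "\<sigma>^2/4 \<le> 1/4" by (simp add: power_le_one)
  have am_gm: "X * Y \<le> \<sigma>^2/4"
    unfolding \<sigma>_def using zero_le_power2[of "X - Y"] by (simp add: power2_eq_square algebra_simps)
  have "f (\<sigma>^2/4) = 49/1600 - 249/800*(1-\<sigma>) + 1699/1600*(1-\<sigma>)^2 + 27/16*(1-\<sigma>)^3
      - 93/64*(1-\<sigma>)^4 - 1/32*(1-\<sigma>)^5 + 1/64*(1-\<sigma>)^6"
    unfolding f_def c1_def by (simp add: field_simps power_numeral_reduce; algebra)
  then have "0 \<le> f (\<sigma>^2/4)"
    using sextic_nonneg_on_unit_interval[of "1 - \<sigma>"] \<open>0 < \<sigma>\<close> \<open>\<sigma> \<le> 1\<close> by simp
  moreover have "0 \<le> f 0" unfolding f_def using \<open>\<sigma> \<le> 1\<close> by simp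
  moreover have "0 \<le> X * Y" using assms by simp
  ultimately have "0 \<le> f (X * Y)"
    using monic_cubic_nonneg_between[of "\<sigma>^2/4" "X * Y" "- 1 - \<sigma>" "1 - \<sigma>" c1]
      am_gm \<open>0 < \<sigma>\<close> \<open>\<sigma>^2/4 \<le> 1/4\<close> unfolding f_def by simp
  with symmetric show ?thesis by linarith
qed

lemma sinh_le_affine:
  fixes s :: real
  assumes "1 \<le> s" "s \<le> 2"
  shows "sinh s \<le> 6/5 + 5/2 * (s - 1)"
proof -
  define w where "w = s - 1"
  define E where "E = exp (1::real)"
  have "0 \<le> w" "w \<le> 1" using assms unfolding w_def by auto
  have "E < 272/100" "0 < E" unfolding E_def using e_less_272 by auto
  have "exp ((1 - w) *\<^sub>R 1 + w *\<^sub>R 2) \<le> (1 - w) * exp 1 + w * exp (2::real)"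
    using convex_onD[OF exp_convex, of w 1 2] \<open>0 \<le> w\<close> \<open>w \<le> 1\<close> by simp
  moreover have "(1 - w) *\<^sub>R 1 + w *\<^sub>R (2::real) = s" unfolding w_def by (simp add: algebra_simps)
  ultimately have upper: "exp s \<le> (1 - w) * E + w * E^2"
    unfolding E_def by (simp add: power2_eq_square flip: exp_add)
  have "exp (- s) = exp (-1) * exp (- w)" unfolding w_def by (simp flip: exp_add)
  moreover have "1 - w \<le> exp (- w)" using exp_ge_add_one_self[of "- w"] by simp
  moreover have "exp (-1) = 1 / E" unfolding E_def by (simp add: exp_minus inverse_eq_divide)
  ultimately have lower: "(1 - w) / E \<le> exp (- s)"
    using \<open>0 < E\<close> by (simp add: divide_right_mono)
  have "100/272 < 1/E" using \<open>E < 272/100\<close> \<open>0 < E\<close> by (simp add: field_simps)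
  then have "E - 1/E \<le> 272/100 - 100/272" using \<open>E < 272/100\<close> by linarith
  then have "(1 - w) * (E - 1/E) \<le> (1 - w) * (272/100 - 100/272)"
    using \<open>w \<le> 1\<close> by (intro mult_left_mono) auto
  moreover have "E^2 \<le> (272/100)^2" using \<open>E < 272/100\<close> \<open>0 < E\<close> by (intro power_mono) auto
  then have "w * E^2 \<le> w * (272/100)^2" using \<open>0 \<le> w\<close> by (intro mult_left_mono) auto
  moreover have "exp s - exp (- s) \<le> (1 - w) * (E - 1/E) + w * E^2"
    using upper lower by (simp add: algebra_simps)
  ultimately have "exp s - exp (- s) \<le> (1 - w) * (272/100 - 100/272) + w * (272/100)^2"
    by linarith
  also have "\<dots> \<le> 2 * (6/5 + 5/2 * w)"
    using \<open>0 \<le> w\<close> \<open>w \<le> 1\<close> by (simp add: power2_eq_square field_simps)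
  finally show ?thesis unfolding sinh_def w_def by simp
qed

lemma two_mult_le_weighted_sum:
  fixes r u v k :: real
  assumes "0 < r" "0 \<le> u" "0 \<le> v" "0 \<le> k" "k^2 \<le> u * v"
  shows "2 * k \<le> r * u + v / r"
proof (rule power2_le_imp_le)
  have "(r * u + v / r)^2 = (r * u - v / r)^2 + 4 * (u * v)"
    using \<open>0 < r\<close> by (simp add: field_simps power2_eq_square)
  moreover have "(2 * k)^2 = 4 * k^2" by simp
  ultimately show "(2 * k)^2 \<le> (r * u + v / r)^2"
    using assms(5) zero_le_power2[of "r * u - v / r"] by linarith
  show "0 \<le> r * u + v / r" using assms by simp
qed

lemma crown_area_double_step:
  fixes a p q b :: real
  assumes "0 < a" "0 < b"
  shows "T (a, 1 / a) (p, q) + T (p, q) (1 / b, b)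
    = (1 + p * q - a * q - p * b)
      + (q / a + p / b - p^2 - q^2 - a^2 - b^2 + p * a + q * b) / 2"
  unfolding T_def using assms by (simp add: field_simps power2_eq_square)

lemma crown_excess_lower_bound:
  fixes a p q b :: real
  assumes "0 < a" "0 < p" "0 < q" "0 < b" "p * q \<le> 1" "a / p + b / q \<le> 1"
  shows "2 * (6/5 + 5/2 * (1 - a / p - b / q))
           \<le> q / a + p / b - p^2 - q^2 - a^2 - b^2 + p * a + q * b"
proof -
  define X where "X = a / p"
  define Y where "Y = b / q"
  define D1 where "D1 = 1 / X - (1 - Y + Y^2)"
  define D2 where "D2 = 1 / Y - (1 - X + X^2)"
  define K where "K = 6/5 + 5/2 * (1 - X - Y)"
  have "0 < X" "0 < Y" "X + Y \<le> 1" using assms unfolding X_def Y_def by auto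
  have m_bounds: "0 \<le> 1 - t + t^2" "1 - t + t^2 \<le> 1" if "0 < t" "t < 1" for t :: real
    using that zero_le_power2[of "t - 1/2"]
    by (auto simp: power2_eq_square algebra_simps mult_le_cancel_right1)
  have "X * (1 - Y + Y^2) \<le> 1" "Y * (1 - X + X^2) \<le> 1"
    using \<open>0 < X\<close> \<open>0 < Y\<close> \<open>X + Y \<le> 1\<close> m_bounds by (auto intro!: mult_le_one)
  then have "0 \<le> D1" "0 \<le> D2"
    unfolding D1_def D2_def using \<open>0 < X\<close> \<open>0 < Y\<close> by (simp_all add: field_simps)
  have "(1 - X * (1 - Y + Y^2)) * (1 - Y * (1 - X + X^2)) = X * Y * (D1 * D2)"
    unfolding D1_def D2_def using \<open>0 < X\<close> \<open>0 < Y\<close> by (simp add: field_simps)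
  then have "X * Y * K^2 \<le> X * Y * (D1 * D2)"
    using deficit_product_lower_bound[OF \<open>0 < X\<close> \<open>0 < Y\<close> \<open>X + Y \<le> 1\<close>]
    unfolding K_def by simp
  then have "K^2 \<le> D1 * D2" using \<open>0 < X\<close> \<open>0 < Y\<close> by simp
  moreover have "0 \<le> K" unfolding K_def using \<open>X + Y \<le> 1\<close> by simp
  ultimately have "2 * K \<le> (q / p) * D1 + D2 / (q / p)"
    using two_mult_le_weighted_sum[of "q / p" D1 D2 K] \<open>0 \<le> D1\<close> \<open>0 \<le> D2\<close> assms by simp
  \<comment> \<open>\<open>p q \<le> 1\<close> lets \<open>p\<^sup>2\<close> and \<open>q\<^sup>2\<close> be replaced by \<open>p/q\<close> and \<open>q/p\<close>.\<close>
  also have "\<dots> \<le> q / a + p / b - p^2 * (1 - X + X^2) - q^2 * (1 - Y + Y^2)"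
  proof -
    have "p^2 \<le> p / q" "q^2 \<le> q / p"
      using assms by (simp_all add: field_simps power2_eq_square mult_le_cancel_left1)
    moreover have "0 \<le> 1 - X + X^2" "0 \<le> 1 - Y + Y^2"
      using \<open>0 < X\<close> \<open>0 < Y\<close> \<open>X + Y \<le> 1\<close> m_bounds by auto
    ultimately have "p^2 * (1 - X + X^2) \<le> p / q * (1 - X + X^2)"
      "q^2 * (1 - Y + Y^2) \<le> q / p * (1 - Y + Y^2)"
      by (meson mult_right_mono)+
    moreover have "(q / p) * D1 + D2 / (q / p)
        = q / a + p / b - q / p * (1 - Y + Y^2) - p / q * (1 - X + X^2)"
      unfolding D1_def D2_def X_def Y_def using assms by (simp add: field_simps)
    ultimately show ?thesis by linarith
  qed
  also have "\<dots> = q / a + p / b - p^2 - q^2 - a^2 - b^2 + p * a + q * b"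
    unfolding X_def Y_def using assms by (simp add: field_simps power2_eq_square)
  finally show ?thesis unfolding K_def X_def Y_def .
qed

theorem mainTheorem5:
  fixes x1 x2 y2 y3 :: real
  assumes "x1 > 0" "x2 > 0" "y2 > 0" "y3 > 0"
    and "x1 < x2" "x2 < 1 / y3"
    and "y3 < y2" "y2 < 1 / x1"
    and "x2 * y2 < 1"
    and "1 + (x2 - x1) * y2 + (1 / y3 - x2) * y3 \<ge> 2"
  shows "T (x1, 1 / x1) (x2, y2) + T (x2, y2) (1 / y3, y3)
           \<ge> (1 + (x2 - x1) * y2 + (1 / y3 - x2) * y3) - 1
              + sinh ((1 + (x2 - x1) * y2 + (1 / y3 - x2) * y3) - 1)"
proof -
  define s where "s = (1 + (x2 - x1) * y2 + (1 / y3 - x2) * y3) - 1"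
  define W where "W = 1 - x1 / x2 - y3 / y2"
  define L where "L = y2 / x1 + x2 / y3 - x2^2 - y2^2 - x1^2 - y3^2 + x2 * x1 + y2 * y3"
  have s_eq: "s = 1 + x2 * y2 - x1 * y2 - x2 * y3"
    unfolding s_def using assms by (simp add: algebra_simps)
  have s_minus_one: "s - 1 = x2 * y2 * W"
    unfolding s_eq W_def using assms by (simp add: field_simps)
  have "1 \<le> s" using assms unfolding s_def by simp
  with s_minus_one have "0 \<le> x2 * y2 * W" by simp
  moreover have "0 < x2 * y2" using assms by simp
  ultimately have "0 \<le> W" by (simp add: zero_le_mult_iff)
  have "s - 1 \<le> W"
    using s_minus_one \<open>0 \<le> W\<close> assms mult_left_le_one_le[of W "x2 * y2"] by simp
  have "0 < x1 / x2" "0 < y3 / y2" using assms by simp_all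
  then have "W \<le> 1" unfolding W_def by simp
  then have "sinh s \<le> 6/5 + 5/2 * (s - 1)"
    using sinh_le_affine \<open>1 \<le> s\<close> \<open>s - 1 \<le> W\<close> by simp
  also have "\<dots> \<le> 6/5 + 5/2 * W" using \<open>s - 1 \<le> W\<close> by simp
  moreover have "2 * (6/5 + 5/2 * W) \<le> L"
    using crown_excess_lower_bound[of x1 x2 y2 y3] \<open>0 \<le> W\<close> assms
    unfolding L_def W_def by simp
  ultimately show ?thesis
    unfolding s_def[symmetric] crown_area_double_step[OF \<open>x1 > 0\<close> \<open>y3 > 0\<close>]
    unfolding s_eq[symmetric] L_def[symmetric] by argo
qed

end
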